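(* There is an absolute constant $C>0$ such that for every $m\in\mathbb{N}$ and every $\boldsymbol{\sigma}\in\{0,1\}^m$, with $N=2^{m+1}$, $$ \left|L_2(\widetilde{\mathcal{H}}_m^{\mathrm{sym}}(\boldsymbol{\sigma}))-\frac{1}{N}\sqrt{\frac{\log N}{24\log 2}}\right|\le \frac{C}{N}, $$ i.e. $L_2(\widetilde{\mathcal{H}}_m^{\mathrm{sym}}(\boldsymbol{\sigma}))=\frac{1}{N}\sqrt{\frac{\log{N}}{24\log{2}}}+\mathcal{O}\left(\frac{1}{N}\right)$, where $\log$ is the natural logarithm.
   Context: For an $N$-element point multiset $\mathcal{P}=\{\boldsymbol{x}_0,\dots,\boldsymbol{x}_{N-1}\}$ in $[0,1]^2$ and $\alpha,\beta\in(0,1]$, the local discrepancy is $\Delta(\alpha,\beta,\mathcal{P})=A([0,\alpha)\times[0,\beta),\mathcal{P})-N\alpha\beta$, where $A([0,\alpha)\times[0,\beta),\mathcal{P})$ is the number of indices $0\le n\le N-1$ with $\boldsymbol{x}_n\in[0,\alpha)\times[0,\beta)$ (points counted with multiplicity). The $L_2$ discrepancy is $L_2(\mathcal{P})=\frac1N\left(\int_0^1\int_0^1|\Delta(\alpha,\beta,\mathcal{P})|^2\,d\alpha\,d\beta\right)^{1/2}$. For $\boldsymbol{\sigma}\in\{0,1\}^m$ the shifted Hammersley point set is $$\mathcal{H}_m(\boldsymbol{\sigma})=\left\{\left(\frac{t_m}{2}+\frac{t_{m-1}}{2^2}+\dots+\frac{t_1}{2^m},\ \frac{s_1}{2}+\dots+\frac{s_m}{2^m}\right):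 t_1,\dots,t_m\in\{0,1\}\right\},$$ where $s_j=t_j\oplus\sigma_j$ ($\oplus$ is addition modulo 2); it has $2^m$ points. The set $\widetilde{\mathcal{H}}_m^{\mathrm{sym}}(\boldsymbol{\sigma})$ is the union (as a multiset of $2^{m+1}$ points, some of which may coincide) of $\mathcal{H}_m(\boldsymbol{\sigma})$ with $\{(x,1-y):(x,y)\in\mathcal{H}_m(\boldsymbol{\sigma})\}$. *)

theory Defs
  imports "HOL-Analysis.Analysis"
begin

(* A point multiset is represented as a list of points in real \<times> real (multiplicities preserved). *)

definition count_box :: "real \<Rightarrow> real \<Rightarrow> (real \<times> real) list \<Rightarrow> nat" where
  "count_box \<alpha> \<beta> P = length (filter (\<lambda>x. 0 \<le> fst x \<and> fst x < \<alpha> \<and> 0 \<le> snd x \<and> snd x < \<beta>) P)"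

definition local_disc :: "real \<Rightarrow> real \<Rightarrow> (real \<times> real) list \<Rightarrow> real" where
  "local_disc \<alpha> \<beta> P = real (count_box \<alpha> \<beta> P) - real (length P) * \<alpha> * \<beta>"

definition L2_disc :: "(real \<times> real) list \<Rightarrow> real" where
  "L2_disc P = (1 / real (length P)) *
     sqrt (integral (cbox (0,0) (1,1)) (\<lambda>ab. (local_disc (fst ab) (snd ab) P)\<^sup>2))"

(* Digit vectors t = (t_1,...,t_m) are lists with t_j = t ! (j-1); similarly sigma. *)
definition hammersley_point :: "nat \<Rightarrow> bool list \<Rightarrow> bool list \<Rightarrow> real \<times> real" where
  "hammersley_point m \<sigma> t =
     ((\<Sum>j=1..m. (if t ! (j - 1) then 1 else 0) / 2 ^ (m + 1 - j)),
      (\<Sum>j=1..m. (if t ! (j - 1) \<noteq> \<sigma> ! (j - 1) then 1 else 0) / 2 ^ j))"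

definition shifted_hammersley :: "nat \<Rightarrow> bool list \<Rightarrow> (real \<times> real) list" where
  "shifted_hammersley m \<sigma> = map (hammersley_point m \<sigma>) (List.n_lists m [False, True])"

definition sym_hammersley :: "nat \<Rightarrow> bool list \<Rightarrow> (real \<times> real) list" where
  "sym_hammersley m \<sigma> = shifted_hammersley m \<sigma> @ map (\<lambda>(x, y). (x, 1 - y)) (shifted_hammersley m \<sigma>)"

end

theory Submission
  imports Defs
begin

(*
  Write N = 2^m. The point of the shifted Hammersley set with first coordinate k/N has second
  coordinate bitrev_xor \<sigma> k / N: the binary digits of k reversed and flipped where \<sigma> is set.
  On the grid cell ((u-1)/N, u/N] \<times> (v/N, (v+1)/N] the local discrepancy of the symmetrised set
  differs by at most 5 from the grid value grid_disc \<sigma> u v, so by Minkowski's inequality the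
  L2 norm of the local discrepancy is within 5 of the root mean square of grid_disc \<sigma> over the
  N^2 grid points. Prepending a digit to \<sigma> splits the columns of the grid by parity; this gives linear
  recurrences for that sum and for its mixed sum with the jumps of grid_disc, whose solution
  N^2 (m/24 + 5/72) + 1/18 does not depend on \<sigma>.
*)

section \<open>The digit-reversal permutation\<close>

fun bitrev_xor :: "bool list \<Rightarrow> nat \<Rightarrow> nat" where
  "bitrev_xor [] u = 0"
| "bitrev_xor (c # s) u = (if odd u \<noteq> c then 2 ^ length s else 0) + bitrev_xor s (u div 2)"

lemma bitrev_xor_less: "bitrev_xor s u < 2 ^ length s"
proof (induction s arbitrary: u)
  case (Cons c s)
  have "bitrev_xor s (u div 2) < 2 ^ length s" by (rule Cons.IH)
  then show ?case by auto
qed simp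

lemma inj_on_bitrev_xor: "inj_on (bitrev_xor s) {..<2 ^ length s}"
proof (induction s)
  case Nil
  then show ?case by (simp add: inj_on_def)
next
  case (Cons c s)
  show ?case
  proof (rule inj_onI)
    fix u w
    assume u: "u \<in> {..<2 ^ length (c # s)}" and w: "w \<in> {..<2 ^ length (c # s)}"
      and eq: "bitrev_xor (c # s) u = bitrev_xor (c # s) w"
    have "bitrev_xor s (u div 2) < 2 ^ length s" "bitrev_xor s (w div 2) < 2 ^ length s"
      by (rule bitrev_xor_less)+
    then have parity: "odd u = odd w"
      using eq by (auto split: if_splits)
    with eq have "bitrev_xor s (u div 2) = bitrev_xor s (w div 2)" by auto
    moreover have "u div 2 \<in> {..<2 ^ length s}" "w div 2 \<in> {..<2 ^ length s}" using u w by auto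
    ultimately have "u div 2 = w div 2" using Cons.IH by (auto simp: inj_on_def)
    with parity show "u = w" by (metis div_mult_mod_eq odd_iff_mod_2_eq_one parity_cases)
  qed
qed

lemma bij_betw_bitrev_xor: "bij_betw (bitrev_xor s) {..<2 ^ length s} {..<2 ^ length s}"
proof -
  have "bitrev_xor s ` {..<2 ^ length s} \<subseteq> {..<2 ^ length s}" using bitrev_xor_less by auto
  moreover have "card (bitrev_xor s ` {..<2 ^ length s}) = card {..<(2::nat) ^ length s}"
    using inj_on_bitrev_xor card_image by blast
  ultimately show ?thesis
    using inj_on_bitrev_xor by (simp add: bij_betw_def card_subset_eq)
qed

lemma sum_bitrev_xor_reindex: "(\<Sum>u<2 ^ length s. f (bitrev_xor s u)) = (\<Sum>y<2 ^ length s. f y)"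
  using sum.reindex_bij_betw[OF bij_betw_bitrev_xor, of f] by simp

definition count_below :: "bool list \<Rightarrow> nat \<Rightarrow> nat \<Rightarrow> nat" where
  "count_below s u v = card {k. k < u \<and> bitrev_xor s k < v}"

lemma count_below_Suc:
  "count_below s (Suc u) v = count_below s u v + (if bitrev_xor s u < v then 1 else 0)"
proof -
  have "{k. k < Suc u \<and> bitrev_xor s k < v} =
        {k. k < u \<and> bitrev_xor s k < v} \<union> (if bitrev_xor s u < v then {u} else {})"
    by (auto simp: less_Suc_eq)
  then show ?thesis unfolding count_below_def by (simp add: card_insert_if)
qed

lemma count_below_le: "count_below s u v \<le> u"
proof -
  have "card {k. k < u \<and> bitrev_xor s k < v} \<le> card {..<u}" by (rule card_mono) auto
  then show ?thesis unfolding count_below_def by simp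
qed

lemma count_below_mono: "count_below s u v \<le> count_below s u (Suc v)"
  unfolding count_below_def by (rule card_mono) auto

lemma count_below_Suc_le:
  assumes "u \<le> 2 ^ length s"
  shows "count_below s u (Suc v) \<le> count_below s u v + 1"
proof -
  have split: "{k. k < u \<and> bitrev_xor s k < Suc v} =
      {k. k < u \<and> bitrev_xor s k < v} \<union> {k. k < u \<and> bitrev_xor s k = v}" by auto
  have "card {k. k < u \<and> bitrev_xor s k = v} \<le> Suc 0"
  proof (subst card_le_Suc0_iff_eq)
    show "finite {k. k < u \<and> bitrev_xor s k = v}" by simp
    show "\<forall>x\<in>{k. k < u \<and> bitrev_xor s k = v}. \<forall>y\<in>{k. k < u \<and> bitrev_xor s k = v}. x = y"
      using inj_on_bitrev_xor[of s] assms by (auto simp: inj_on_def)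
  qed
  moreover have "card ({k. k < u \<and> bitrev_xor s k < v} \<union> {k. k < u \<and> bitrev_xor s k = v}) \<le>
      card {k. k < u \<and> bitrev_xor s k < v} + card {k. k < u \<and> bitrev_xor s k = v}"
    by (rule card_Un_le)
  ultimately show ?thesis unfolding count_below_def split by linarith
qed

lemma count_below_full:
  assumes "v \<le> 2 ^ length s"
  shows "count_below s (2 ^ length s) v = v"
proof -
  let ?K = "{k. k < 2 ^ length s \<and> bitrev_xor s k < v}"
  have inj: "inj_on (bitrev_xor s) ?K"
    using inj_on_bitrev_xor by (rule inj_on_subset) auto
  have "bitrev_xor s ` ?K = {..<v}"
  proof (intro subset_antisym subsetI)
    fix y assume y: "y \<in> {..<v}"
    then have "y \<in> bitrev_xor s ` {..<2 ^ length s}"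
      using bij_betw_bitrev_xor[of s] assms unfolding bij_betw_def by auto
    with y show "y \<in> bitrev_xor s ` ?K" by auto
  qed auto
  then have "card ?K = card {..<v}" using card_image[OF inj] by simp
  then show ?thesis unfolding count_below_def by simp
qed

lemma card_parity_class:
  fixes u :: nat
  shows "card {k. k < u \<and> odd k = c \<and> P (k div 2)} =
    card {j. j < (u + (if c then 0 else 1)) div 2 \<and> P j}"
proof -
  let ?f = "\<lambda>j::nat. 2 * j + (if c then 1 else 0)"
  have "{k. k < u \<and> odd k = c \<and> P (k div 2)} = ?f ` {j. j < (u + (if c then 0 else 1)) div 2 \<and> P j}"
  proof (rule set_eqI, rule iffI)
    fix k assume "k \<in> {k. k < u \<and> odd k = c \<and> P (k div 2)}"
    then show "k \<in> ?f ` {j. j < (u + (if c then 0 else 1)) div 2 \<and> P j}"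
      by (cases c) (auto intro!: image_eqI[where x="k div 2"] elim!: oddE evenE)
  qed (cases c; auto)
  moreover have "inj ?f" by (auto simp: inj_def)
  ultimately show ?thesis by (simp add: card_image inj_on_subset)
qed

lemma count_below_Cons_low:
  assumes "v \<le> 2 ^ length s"
  shows "count_below (c # s) u v = count_below s ((u + (if c then 0 else 1)) div 2) v"
proof -
  have "{k. k < u \<and> bitrev_xor (c # s) k < v} = {k. k < u \<and> odd k = c \<and> bitrev_xor s (k div 2) < v}"
    using assms by auto
  then show ?thesis
    unfolding count_below_def using card_parity_class[of u c "\<lambda>j. bitrev_xor s j < v"] by simp
qed

lemma count_below_Cons_high:
  assumes "w \<le> 2 ^ length s"
  shows "count_below (c # s) u (2 ^ length s + w) =
    (u + (if c then 0 else 1)) div 2 + count_below s ((u + (if c then 1 else 0)) div 2) w"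
proof -
  have lt: "\<And>k. bitrev_xor s k < 2 ^ length s" by (rule bitrev_xor_less)
  have "{k. k < u \<and> bitrev_xor (c # s) k < 2 ^ length s + w} =
        {k. k < u \<and> odd k = c \<and> True} \<union> {k. k < u \<and> odd k = (\<not> c) \<and> bitrev_xor s (k div 2) < w}"
    using lt assms by (auto simp: order_less_le_trans[OF lt] add_less_le_mono)
  moreover have "{k. k < u \<and> odd k = c \<and> True} \<inter> {k. k < u \<and> odd k = (\<not> c) \<and> bitrev_xor s (k div 2) < w} = {}"
    by auto
  ultimately have "count_below (c # s) u (2 ^ length s + w) =
      card {k. k < u \<and> odd k = c \<and> True} + card {k. k < u \<and> odd k = (\<not> c) \<and> bitrev_xor s (k div 2) < w}"
    unfolding count_below_def by (simp add: card_Un_disjoint)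
  then show ?thesis
    using card_parity_class[of u c "\<lambda>j. True"] card_parity_class[of u "\<not> c" "\<lambda>j. bitrev_xor s j < w"]
    unfolding count_below_def by simp
qed

section \<open>Discrepancy on the grid and its recurrence\<close>

definition grid_disc :: "bool list \<Rightarrow> nat \<Rightarrow> nat \<Rightarrow> real" where
  "grid_disc s u v = real (count_below s u v) - real (count_below s u (2 ^ length s - 1 - v))
     + real u * (real (2 ^ length s) - 1 - 2 * real v) / real (2 ^ length s)"

definition jump :: "bool list \<Rightarrow> nat \<Rightarrow> nat \<Rightarrow> real" where
  "jump s u v = (if bitrev_xor s u < v then 1 else 0) - (2 * real v + 1) / (2 * real (2 ^ length s))"

definition mirror_jump :: "bool list \<Rightarrow> nat \<Rightarrow> nat \<Rightarrow> real" where
  "mirror_jump s u v = 1 - (if bitrev_xor s u < 2 ^ length s - 1 - v then 1 else 0)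
     - (2 * real v + 1) / (2 * real (2 ^ length s))"

lemma grid_disc_reflect:
  assumes "v < 2 ^ length s"
  shows "grid_disc s u (2 ^ length s - 1 - v) = - grid_disc s u v"
proof -
  have e: "2 ^ length s - 1 - (2 ^ length s - 1 - v) = v" using assms by simp
  have r: "real (2 ^ length s - 1 - v) = real (2 ^ length s) - 1 - real v"
    using assms by (simp add: of_nat_diff)
  show ?thesis unfolding grid_disc_def e r by (simp add: field_simps)
qed

lemma mirror_jump_reflect:
  assumes "v < 2 ^ length s"
  shows "mirror_jump s u (2 ^ length s - 1 - v) = - jump s u v"
proof -
  have e: "2 ^ length s - 1 - (2 ^ length s - 1 - v) = v" using assms by simp
  have r: "real (2 ^ length s - 1 - v) = real (2 ^ length s) - 1 - real v"
    using assms by (simp add: of_nat_diff)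
  have "(0::real) < 2 ^ length s" by simp
  then show ?thesis unfolding mirror_jump_def jump_def e r by (simp add: field_simps)
qed

lemma grid_disc_Cons_even:
  assumes v: "v < 2 ^ length s"
  shows "grid_disc (c # s) (2 * u) v = grid_disc s u v"
proof -
  let ?N = "(2::nat) ^ length s"
  have N: "2 ^ length (c # s) - 1 - v = ?N + (?N - 1 - v)" using v by simp
  have "count_below (c # s) (2 * u) v = count_below s u v"
    using count_below_Cons_low[of v s c "2 * u"] v by (cases c) auto
  moreover have "count_below (c # s) (2 * u) (2 ^ length (c # s) - 1 - v) = u + count_below s u (?N - 1 - v)"
    unfolding N using count_below_Cons_high[of "?N - 1 - v" s c "2 * u"] by (cases c) auto
  moreover have "(0::real) < 2 ^ length s" by simp
  ultimately show ?thesis unfolding grid_disc_def by (simp add: field_simps)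
qed

text \<open>Prepending the digit \<open>c\<close> to \<open>s\<close> refines the grid: the even columns reproduce the
  coarse grid, and the point added in column \<open>2u + 1\<close> lies in the lower half of the square
  iff \<open>c\<close> holds, which decides between the two kinds of jump.\<close>

lemma grid_disc_Cons_odd:
  assumes v: "v < 2 ^ length s"
  shows "grid_disc (c # s) (2 * u + 1) v =
    grid_disc s u v + (if c then mirror_jump s u v else jump s u v)"
proof -
  let ?N = "(2::nat) ^ length s"
  have N: "2 ^ length (c # s) - 1 - v = ?N + (?N - 1 - v)" using v by simp
  have low: "count_below (c # s) (2 * u + 1) v = count_below s (u + (if c then 0 else 1)) v"
    using count_below_Cons_low[of v s c "2 * u + 1"] v by (cases c) auto
  have high: "count_below (c # s) (2 * u + 1) (2 ^ length (c # s) - 1 - v) =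
      u + (if c then 0 else 1) + count_below s (u + (if c then 1 else 0)) (?N - 1 - v)"
    unfolding N using count_below_Cons_high[of "?N - 1 - v" s c "2 * u + 1"] by (cases c) auto
  have "(0::real) < 2 ^ length s" by simp
  then show ?thesis
    unfolding grid_disc_def low high mirror_jump_def jump_def
    by (cases c) (simp_all add: count_below_Suc field_simps)
qed

lemma jump_Cons_reflect_diff:
  assumes v: "v < 2 ^ length s"
    and w: "bitrev_xor (c # s) w = (if upper then 2 ^ length s else 0) + bitrev_xor s u"
  shows "jump (c # s) w v - jump (c # s) w (2 * 2 ^ length s - 1 - v) =
    (if upper then mirror_jump s u v else jump s u v)"
proof -
  let ?N = "(2::nat) ^ length s"
  have lt: "bitrev_xor s u < ?N" by (rule bitrev_xor_less)
  have r: "real (2 * ?N - 1 - v) = 2 * real ?N - 1 - real v" using v by (simp add: of_nat_diff)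
  have p: "(0::real) < 2 ^ length s" by simp
  show ?thesis
  proof (cases upper)
    case True
    have "\<not> bitrev_xor (c # s) w < v" using w True v by simp
    moreover have "(bitrev_xor (c # s) w < 2 * ?N - 1 - v) = (bitrev_xor s u < ?N - 1 - v)"
      using w True v by auto
    ultimately show ?thesis using True p unfolding jump_def mirror_jump_def r
      by (simp add: field_simps)
  next
    case False
    have "bitrev_xor (c # s) w < 2 * ?N - 1 - v" using w False v lt by simp
    moreover have "(bitrev_xor (c # s) w < v) = (bitrev_xor s u < v)" using w False by simp
    ultimately show ?thesis using False p unfolding jump_def mirror_jump_def r
      by (simp add: field_simps)
  qed
qed

lemma sum_lessThan_double:
  fixes f :: "nat \<Rightarrow> real"
  shows "(\<Sum>u<2 * M. f u) = (\<Sum>u<M. f (2 * u) + f (2 * u + 1))"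
  using sum_split_even_odd[where f=f and g=f and n=M] by (simp add: sum.distrib)

lemma sum_lessThan_reflect_cong:
  fixes N :: nat
  assumes "\<And>v. v < N \<Longrightarrow> f (N - 1 - v) = g v"
  shows "(\<Sum>v<N. f v) = (\<Sum>v<N. g v)"
proof -
  have "(\<Sum>v<N. f v) = (\<Sum>v<N. f (N - Suc v))" by (rule sum.nat_diff_reindex[symmetric])
  also have "\<dots> = (\<Sum>v<N. g v)" using assms by (intro sum.cong) auto
  finally show ?thesis .
qed

lemma sum_lessThan_double_reflect:
  fixes M :: nat
  shows "(\<Sum>v<2 * M. f v) = (\<Sum>v<M. f v + f (2 * M - 1 - v))"
proof -
  have "(\<Sum>v<2 * M. f v) = (\<Sum>v<M. f v) + (\<Sum>v\<in>{M..<2 * M}. f v)"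
    using sum.atLeastLessThan_concat[of 0 M "2 * M" f] by (simp add: atLeast0LessThan)
  also have "(\<Sum>v\<in>{M..<2 * M}. f v) = (\<Sum>v<M. f (v + M))"
  proof -
    have "{M..<2 * M} = {0 + M..<M + M}" by (simp add: mult_2)
    then show ?thesis by (simp only: sum.shift_bounds_nat_ivl atLeast0LessThan)
  qed
  also have "\<dots> = (\<Sum>v<M. f (2 * M - 1 - v))"
    by (rule sum_lessThan_reflect_cong) (simp add: mult_2)
  finally show ?thesis by (simp add: sum.distrib)
qed

lemma sum_antisymmetric_mult:
  fixes f g :: "nat \<Rightarrow> real"
  assumes "\<And>v. v < M \<Longrightarrow> f (2 * M - 1 - v) = - f v"
  shows "(\<Sum>v<2 * M. f v * g v) = (\<Sum>v<M. f v * (g v - g (2 * M - 1 - v)))"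
  unfolding sum_lessThan_double_reflect using assms by (intro sum.cong) (auto simp: algebra_simps)

definition grid_sq_sum :: "bool list \<Rightarrow> real" where
  "grid_sq_sum s = (\<Sum>u<2 ^ length s. \<Sum>v<2 ^ length s. (grid_disc s u v)\<^sup>2)"

definition grid_jump_sum :: "bool list \<Rightarrow> real" where
  "grid_jump_sum s = (\<Sum>u<2 ^ length s. \<Sum>v<2 ^ length s. grid_disc s u v * jump s u v)"

definition jump_sq_sum :: "bool list \<Rightarrow> real" where
  "jump_sq_sum s = (\<Sum>u<2 ^ length s. \<Sum>v<2 ^ length s. (jump s u v)\<^sup>2)"

definition jump_mirror_sum :: "bool list \<Rightarrow> real" where
  "jump_mirror_sum s = (\<Sum>u<2 ^ length s. \<Sum>v<2 ^ length s. jump s u v * mirror_jump s u v)"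

lemma sum_grid_disc_mirror_jump:
  "(\<Sum>v<2 ^ length s. grid_disc s u v * mirror_jump s u v) = (\<Sum>v<2 ^ length s. grid_disc s u v * jump s u v)"
proof (rule sum_lessThan_reflect_cong)
  fix v :: nat assume "v < 2 ^ length s"
  then show "grid_disc s u (2 ^ length s - 1 - v) * mirror_jump s u (2 ^ length s - 1 - v) =
      grid_disc s u v * jump s u v"
    using grid_disc_reflect[of v s u] mirror_jump_reflect[of v s u] by simp
qed

lemma sum_mirror_jump_sq:
  "(\<Sum>v<2 ^ length s. (mirror_jump s u v)\<^sup>2) = (\<Sum>v<2 ^ length s. (jump s u v)\<^sup>2)"
proof (rule sum_lessThan_reflect_cong)
  fix v :: nat assume "v < 2 ^ length s"
  then show "(mirror_jump s u (2 ^ length s - 1 - v))\<^sup>2 = (jump s u v)\<^sup>2"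
    using mirror_jump_reflect[of v s u] by simp
qed

lemma sum_grid_disc_Cons_sq:
  "(\<Sum>v<2 ^ length (c # s). (grid_disc (c # s) u v)\<^sup>2) = 2 * (\<Sum>v<2 ^ length s. (grid_disc (c # s) u v)\<^sup>2)"
proof -
  have "(\<Sum>v<2 * 2 ^ length s. grid_disc (c # s) u v * grid_disc (c # s) u v) =
      (\<Sum>v<2 ^ length s. grid_disc (c # s) u v *
         (grid_disc (c # s) u v - grid_disc (c # s) u (2 * 2 ^ length s - 1 - v)))"
    using grid_disc_reflect[of _ "c # s"] by (intro sum_antisymmetric_mult) simp
  also have "\<dots> = (\<Sum>v<2 ^ length s. 2 * (grid_disc (c # s) u v)\<^sup>2)"
    using grid_disc_reflect[of _ "c # s"] by (intro sum.cong) (simp_all add: power2_eq_square)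
  finally show ?thesis by (simp add: power2_eq_square sum_distrib_left)
qed

lemma sum_grid_disc_Cons_odd_sq:
  "(\<Sum>v<2 ^ length s. (grid_disc (c # s) (2 * u + 1) v)\<^sup>2) = (\<Sum>v<2 ^ length s. (grid_disc s u v)\<^sup>2)
     + 2 * (\<Sum>v<2 ^ length s. grid_disc s u v * jump s u v) + (\<Sum>v<2 ^ length s. (jump s u v)\<^sup>2)"
proof -
  let ?h = "\<lambda>v. if c then mirror_jump s u v else jump s u v"
  have "(\<Sum>v<2 ^ length s. (grid_disc (c # s) (2 * u + 1) v)\<^sup>2) =
      (\<Sum>v<2 ^ length s. (grid_disc s u v)\<^sup>2 + 2 * (grid_disc s u v * ?h v) + (?h v)\<^sup>2)"
  proof (rule sum.cong[OF refl])
    fix v :: nat assume "v \<in> {..<2 ^ length s}"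
    then show "(grid_disc (c # s) (2 * u + 1) v)\<^sup>2 =
        (grid_disc s u v)\<^sup>2 + 2 * (grid_disc s u v * ?h v) + (?h v)\<^sup>2"
      by (simp only: grid_disc_Cons_odd lessThan_iff) (simp add: power2_eq_square algebra_simps)
  qed
  also have "\<dots> = (\<Sum>v<2 ^ length s. (grid_disc s u v)\<^sup>2) + 2 * (\<Sum>v<2 ^ length s. grid_disc s u v * ?h v)
      + (\<Sum>v<2 ^ length s. (?h v)\<^sup>2)"
    by (simp add: sum.distrib sum_distrib_left)
  finally show ?thesis
    by (cases c) (simp_all add: sum_grid_disc_mirror_jump sum_mirror_jump_sq)
qed

lemma grid_sq_sum_Cons: "grid_sq_sum (c # s) = 4 * grid_sq_sum s + 4 * grid_jump_sum s + 2 * jump_sq_sum s"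
proof -
  let ?N = "(2::nat) ^ length s"
  let ?F = "\<lambda>u. \<Sum>v<?N. (grid_disc (c # s) u v)\<^sup>2"
  have "grid_sq_sum (c # s) = (\<Sum>u<2 * ?N. 2 * ?F u)"
    unfolding grid_sq_sum_def sum_grid_disc_Cons_sq by simp
  also have "\<dots> = (\<Sum>u<?N. 2 * ?F (2 * u) + 2 * ?F (2 * u + 1))" by (rule sum_lessThan_double)
  also have "\<dots> = (\<Sum>u<?N. 4 * (\<Sum>v<?N. (grid_disc s u v)\<^sup>2) + 4 * (\<Sum>v<?N. grid_disc s u v * jump s u v)
       + 2 * (\<Sum>v<?N. (jump s u v)\<^sup>2))"
    by (intro sum.cong refl) (simp only: sum_grid_disc_Cons_odd_sq, simp add: grid_disc_Cons_even)
  also have "\<dots> = 4 * grid_sq_sum s + 4 * grid_jump_sum s + 2 * jump_sq_sum s"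
    unfolding grid_sq_sum_def grid_jump_sum_def jump_sq_sum_def by (simp add: sum.distrib sum_distrib_left)
  finally show ?thesis .
qed

lemma grid_jump_sum_Cons: "grid_jump_sum (c # s) = 2 * grid_jump_sum s + jump_mirror_sum s"
proof -
  let ?N = "(2::nat) ^ length s"
  let ?D = "\<lambda>u v. jump (c # s) u v - jump (c # s) u (2 * ?N - 1 - v)"
  have "(\<Sum>v<2 * ?N. grid_disc (c # s) u v * jump (c # s) u v) = (\<Sum>v<?N. grid_disc (c # s) u v * ?D u v)"
    for u by (rule sum_antisymmetric_mult) (use grid_disc_reflect[of _ "c # s"] in simp)
  then have "grid_jump_sum (c # s) = (\<Sum>u<2 * ?N. \<Sum>v<?N. grid_disc (c # s) u v * ?D u v)"
    unfolding grid_jump_sum_def by simp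
  also have "\<dots> = (\<Sum>u<?N. \<Sum>v<?N. grid_disc (c # s) (2 * u) v * ?D (2 * u) v
      + grid_disc (c # s) (2 * u + 1) v * ?D (2 * u + 1) v)"
    by (simp add: sum_lessThan_double sum.distrib)
  also have "\<dots> = (\<Sum>u<?N. \<Sum>v<?N. grid_disc s u v * jump s u v + grid_disc s u v * mirror_jump s u v
      + jump s u v * mirror_jump s u v)"
  proof (intro sum.cong refl)
    fix u v assume "v \<in> {..<?N}"
    then have v: "v < ?N" by simp
    have "?D (2 * u) v = (if c then mirror_jump s u v else jump s u v)"
      using jump_Cons_reflect_diff[OF v, of c "2 * u" c u] by simp
    moreover have "?D (2 * u + 1) v = (if c then jump s u v else mirror_jump s u v)"
      using jump_Cons_reflect_diff[OF v, of c "2 * u + 1" "\<not> c" u] by simp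
    ultimately show "grid_disc (c # s) (2 * u) v * ?D (2 * u) v + grid_disc (c # s) (2 * u + 1) v * ?D (2 * u + 1) v
        = grid_disc s u v * jump s u v + grid_disc s u v * mirror_jump s u v + jump s u v * mirror_jump s u v"
      unfolding grid_disc_Cons_even[OF v] grid_disc_Cons_odd[OF v]
      by (cases c) (simp_all add: algebra_simps)
  qed
  also have "\<dots> = 2 * grid_jump_sum s + jump_mirror_sum s"
    unfolding grid_jump_sum_def jump_mirror_sum_def
    by (simp add: sum.distrib sum_distrib_left sum_grid_disc_mirror_jump)
  finally show ?thesis .
qed

section \<open>Closed forms of the grid sums\<close>

lemma sum_lessThan_indicator: "(\<Sum>y<N. (if y < a then 1 else 0)::real) = real (min N a)"
  by (induction N) (auto simp: min_def)

lemma sum_lessThan_real: "(\<Sum>v<N. real v) = real N * (real N - 1) / 2"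
  by (induction N) (auto simp: field_simps)

lemma sum_lessThan_real_sq: "(\<Sum>v<N. (real v)\<^sup>2) = real N * (real N - 1) * (2 * real N - 1) / 6"
  by (induction N) (auto simp: field_simps power2_eq_square)

lemma sum_indicator_minus_sq:
  assumes "v \<le> N"
  shows "(\<Sum>y<N. ((if y < v then 1 else 0) - c)\<^sup>2) = real v * (1 - 2 * c) + real N * c\<^sup>2"
proof -
  have "(\<Sum>y<N. ((if y < v then 1 else 0) - c)\<^sup>2) = (\<Sum>y<N. c\<^sup>2 + (1 - 2 * c) * (if y < v then 1 else 0))"
    by (rule sum.cong) (auto simp: power2_eq_square algebra_simps)
  also have "\<dots> = real N * c\<^sup>2 + (1 - 2 * c) * real (min N v)"
    by (simp add: sum.distrib sum_distrib_left[symmetric] sum_lessThan_indicator)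
  also have "min N v = v" using assms by simp
  finally show ?thesis by (simp add: algebra_simps)
qed

lemma double_sum_jump_sq:
  assumes N: "N > 0"
  shows "(\<Sum>v<N. \<Sum>y<N. ((if y < v then 1 else 0) - (2 * real v + 1) / (2 * real N))\<^sup>2) =
    (real N)\<^sup>2 / 6 + 1 / 12"
proof -
  have NN: "real N > 0" using N by simp
  have "(\<Sum>v<N. \<Sum>y<N. ((if y < v then 1 else 0) - (2 * real v + 1) / (2 * real N))\<^sup>2)
      = (\<Sum>v<N. real v + 1 / (4 * real N) - (real v)\<^sup>2 / real N)"
  proof (rule sum.cong[OF refl])
    fix v assume "v \<in> {..<N}"
    then have "v \<le> N" by simp
    then show "(\<Sum>y<N. ((if y < v then 1 else 0) - (2 * real v + 1) / (2 * real N))\<^sup>2) = real v + 1 / (4 * real N) - (real v)\<^sup>2 / real N"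
      unfolding sum_indicator_minus_sq[OF \<open>v \<le> N\<close>] using NN by (simp add: field_simps power2_eq_square)
  qed
  also have "\<dots> = real N * (real N - 1) / 2 + real N / (4 * real N) - (real N * (real N - 1) * (2 * real N - 1) / 6) / real N"
    by (simp add: sum.distrib sum_subtractf sum_lessThan_real sum_divide_distrib[symmetric] sum_lessThan_real_sq)
  also have "\<dots> = (real N)\<^sup>2 / 6 + 1 / 12" using NN by (simp add: field_simps power2_eq_square)
  finally show ?thesis .
qed

lemma jump_sq_sum_eq: "jump_sq_sum s = (real (2 ^ length s))\<^sup>2 / 6 + 1 / 12"
proof -
  let ?N = "(2::nat) ^ length s"
  let ?f = "\<lambda>y. \<Sum>v<?N. ((if y < v then 1 else 0) - (2 * real v + 1) / (2 * real ?N))\<^sup>2"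
  have "jump_sq_sum s = (\<Sum>u<?N. ?f (bitrev_xor s u))" unfolding jump_sq_sum_def jump_def by simp
  also have "\<dots> = (\<Sum>y<?N. ?f y)" by (rule sum_bitrev_xor_reindex)
  also have "\<dots> = (\<Sum>v<?N. \<Sum>y<?N. ((if y < v then 1 else 0) - (2 * real v + 1) / (2 * real ?N))\<^sup>2)"
    by (rule sum.swap)
  also have "\<dots> = (real ?N)\<^sup>2 / 6 + 1 / 12" by (rule double_sum_jump_sq) simp
  finally show ?thesis .
qed

lemma sum_lessThan_indicator_mult:
  "(\<Sum>y<N. ((if y < a then 1 else 0) * (if y < b then 1 else 0))::real) = real (min N (min a b))"
proof -
  have eq: "\<And>y. ((if y < a then 1 else 0) * (if y < b then 1 else 0)::real) = (if y < min a b then 1 else 0)"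
    by auto
  show ?thesis by (simp only: eq sum_lessThan_indicator)
qed

lemma sum_indicator_mirror_prod:
  assumes "v < N"
  shows "(\<Sum>y<N. ((if y < v then 1 else 0) - c) * (1 - (if y < N - 1 - v then 1 else 0) - c))
     = real v - real (min v (N - 1 - v)) - c * (2 * real v + 1) + real N * c\<^sup>2"
proof -
  have "(\<Sum>y<N. ((if y < v then 1 else 0) - c) * (1 - (if y < N - 1 - v then 1 else 0) - c))
    = (\<Sum>y<N. (if y < v then 1 else 0) - ((if y < v then 1 else 0) * (if y < N - 1 - v then 1 else 0))
         - c * (if y < v then 1 else 0) - c + c * (if y < N - 1 - v then 1 else 0) + c\<^sup>2)"
    by (rule sum.cong) (auto simp: algebra_simps power2_eq_square)
  also have "\<dots> = real (min N v) - real (min N (min v (N - 1 - v))) - c * real (min N v) - real N * c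
       + c * real (min N (N - 1 - v)) + real N * c\<^sup>2"
    by (simp add: sum.distrib sum_subtractf sum_distrib_left[symmetric] sum_lessThan_indicator sum_lessThan_indicator_mult)
  also have "\<dots> = real v - real (min v (N - 1 - v)) - c * (2 * real v + 1) + real N * c\<^sup>2"
    using assms by (simp add: of_nat_diff algebra_simps min_def)
  finally show ?thesis .
qed

lemma jump_mirror_sum_swap:
  "jump_mirror_sum s = (\<Sum>v<2 ^ length s. \<Sum>y<2 ^ length s.
      ((if y < v then 1 else 0) - (2 * real v + 1) / (2 * real ((2::nat) ^ length s)))
    * (1 - (if y < 2 ^ length s - 1 - v then 1 else 0) - (2 * real v + 1) / (2 * real ((2::nat) ^ length s))))"
  (is "_ = ?R")
proof -
  let ?N = "(2::nat) ^ length s"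
  let ?f = "\<lambda>y. \<Sum>v<?N. ((if y < v then 1 else 0) - (2 * real v + 1) / (2 * real ?N))
     * (1 - (if y < ?N - 1 - v then 1 else 0) - (2 * real v + 1) / (2 * real ?N))"
  have "jump_mirror_sum s = (\<Sum>u<?N. ?f (bitrev_xor s u))" unfolding jump_mirror_sum_def jump_def mirror_jump_def by simp
  also have "\<dots> = (\<Sum>y<?N. ?f y)" by (rule sum_bitrev_xor_reindex)
  also have "\<dots> = ?R" by (rule sum.swap)
  finally show ?thesis .
qed

lemma double_sum_jump_mirror:
  assumes N: "N > 0"
  shows "(\<Sum>v<N. \<Sum>y<N. ((if y < v then 1 else 0) - (2 * real v + 1) / (2 * real N))
     * (1 - (if y < N - 1 - v then 1 else 0) - (2 * real v + 1) / (2 * real N)))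
   = (\<Sum>v<N. real v - real (min v (N - 1 - v))) - (\<Sum>v<N. (2 * real v + 1)\<^sup>2) / (4 * real N)"
proof -
  have NN: "real N > 0" using N by simp
  have "(\<Sum>v<N. \<Sum>y<N. ((if y < v then 1 else 0) - (2 * real v + 1) / (2 * real N))
     * (1 - (if y < N - 1 - v then 1 else 0) - (2 * real v + 1) / (2 * real N)))
    = (\<Sum>v<N. (real v - real (min v (N - 1 - v))) - (2 * real v + 1)\<^sup>2 / (4 * real N))"
  proof (rule sum.cong[OF refl])
    fix v assume "v \<in> {..<N}"
    then have v: "v < N" by simp
    show "(\<Sum>y<N. ((if y < v then 1 else 0) - (2 * real v + 1) / (2 * real N))
     * (1 - (if y < N - 1 - v then 1 else 0) - (2 * real v + 1) / (2 * real N))) =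
       (real v - real (min v (N - 1 - v))) - (2 * real v + 1)\<^sup>2 / (4 * real N)"
      unfolding sum_indicator_mirror_prod[OF v] using NN by (simp add: field_simps power2_eq_square)
  qed
  also have "\<dots> = (\<Sum>v<N. real v - real (min v (N - 1 - v))) - (\<Sum>v<N. (2 * real v + 1)\<^sup>2) / (4 * real N)"
    by (simp add: sum_subtractf sum_divide_distrib)
  finally show ?thesis .
qed

lemma sum_lessThan_odd_sq: "(\<Sum>v<N. (2 * real v + 1)\<^sup>2) = real N * (4 * (real N)\<^sup>2 - 1) / 3"
  by (induction N) (auto simp: field_simps power2_eq_square)

lemma sum_diff_min_reflect: "(\<Sum>v<2 * M. real v - real (min v (2 * M - 1 - v))) = (real M)\<^sup>2"
proof -
  have "(\<Sum>v<2 * M. real v - real (min v (2 * M - 1 - v))) =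
     (\<Sum>v<M. (real v - real (min v (2 * M - 1 - v))) + (real (2 * M - 1 - v) - real (min (2 * M - 1 - v) (2 * M - 1 - (2 * M - 1 - v)))))"
    by (rule sum_lessThan_double_reflect)
  also have "\<dots> = (\<Sum>v<M. 2 * real M - 1 - 2 * real v)"
  proof (rule sum.cong[OF refl])
    fix v assume "v \<in> {..<M}"
    then have v: "v < M" by simp
    have a: "min v (2 * M - 1 - v) = v" using v by simp
    have b: "2 * M - 1 - (2 * M - 1 - v) = v" using v by simp
    have c: "min (2 * M - 1 - v) v = v" using v by simp
    show "(real v - real (min v (2 * M - 1 - v))) + (real (2 * M - 1 - v) - real (min (2 * M - 1 - v) (2 * M - 1 - (2 * M - 1 - v)))) = 2 * real M - 1 - 2 * real v"
      unfolding a b c using v by (simp add: of_nat_diff)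
  qed
  also have "\<dots> = real M * (2 * real M - 1) - 2 * (real M * (real M - 1) / 2)"
    by (simp add: sum_subtractf sum_distrib_left[symmetric] sum_lessThan_real)
  also have "\<dots> = (real M)\<^sup>2" by (simp add: field_simps power2_eq_square)
  finally show ?thesis .
qed

lemma jump_mirror_sum_eq:
  "jump_mirror_sum s = (if length s = 0 then -1 / 4 else (1 - (real ((2::nat) ^ length s))\<^sup>2) / 12)"
proof (cases "length s")
  case 0
  then show ?thesis unfolding jump_mirror_sum_swap by simp
next
  case (Suc L)
  let ?M = "(2::nat) ^ L"
  have N: "(2::nat) ^ length s = 2 * ?M" using Suc by simp
  have "jump_mirror_sum s = (\<Sum>v<2 * ?M. real v - real (min v (2 * ?M - 1 - v))) - (\<Sum>v<2 * ?M. (2 * real v + 1)\<^sup>2) / (4 * real (2 * ?M))"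
    unfolding jump_mirror_sum_swap N by (rule double_sum_jump_mirror) simp
  also have "\<dots> = (real ?M)\<^sup>2 - (real (2 * ?M) * (4 * (real (2 * ?M))\<^sup>2 - 1) / 3) / (4 * real (2 * ?M))"
    by (simp only: sum_diff_min_reflect sum_lessThan_odd_sq)
  also have "\<dots> = (1 - (real (2 * ?M))\<^sup>2) / 12"
    by (simp add: field_simps power2_eq_square)
  finally show ?thesis using Suc N by simp
qed

lemma grid_jump_sum_Nil: "grid_jump_sum [] = 0"
  unfolding grid_jump_sum_def grid_disc_def count_below_def by simp

lemma grid_sq_sum_Nil: "grid_sq_sum [] = 0"
  unfolding grid_sq_sum_def grid_disc_def count_below_def by simp

lemma grid_sums_closed_form:
  assumes "s \<noteq> []"
  shows "grid_jump_sum s = - (real (2 ^ length s))\<^sup>2 / 24 - 1 / 12"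
    and "grid_sq_sum s = (real (2 ^ length s))\<^sup>2 * (real (length s) / 24 + 5 / 72) + 1 / 18"
  using assms
proof (induction s rule: list_nonempty_induct)
  case (single c)
  show "grid_jump_sum [c] = - (real (2 ^ length [c]))\<^sup>2 / 24 - 1 / 12"
    and "grid_sq_sum [c] = (real (2 ^ length [c]))\<^sup>2 * (real (length [c]) / 24 + 5 / 72) + 1 / 18"
    by (simp_all add: grid_jump_sum_Cons grid_sq_sum_Cons grid_jump_sum_Nil grid_sq_sum_Nil
        jump_mirror_sum_eq jump_sq_sum_eq)
next
  case (cons c s)
  define X where "X = real (2 ^ length s)"
  have X2: "real (2 ^ length (c # s)) = 2 * X" and len: "real (length (c # s)) = real (length s) + 1"
    unfolding X_def by simp_all
  have J: "jump_mirror_sum s = (1 - X\<^sup>2) / 12"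
    using cons.hyps by (simp add: jump_mirror_sum_eq X_def)
  have H: "jump_sq_sum s = X\<^sup>2 / 6 + 1 / 12"
    unfolding jump_sq_sum_eq X_def ..
  show "grid_jump_sum (c # s) = - (real (2 ^ length (c # s)))\<^sup>2 / 24 - 1 / 12"
    and "grid_sq_sum (c # s) = (real (2 ^ length (c # s)))\<^sup>2 * (real (length (c # s)) / 24 + 5 / 72) + 1 / 18"
    unfolding grid_jump_sum_Cons grid_sq_sum_Cons cons.IH[folded X_def] J H X2 len
    by (simp_all add: field_simps power2_eq_square)
qed

lemma grid_sq_sum_approx:
  "\<bar>grid_sq_sum s / (real (2 ^ length s))\<^sup>2 - real (length s + 1) / 24\<bar> \<le> 1"
proof (cases "s = []")
  case False
  define Nsq where "Nsq = (real (2 ^ length s))\<^sup>2"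
  have "1 \<le> Nsq" unfolding Nsq_def by simp
  then have "0 \<le> 1 / (18 * Nsq)" "1 / (18 * Nsq) \<le> 1 / 18" by (simp_all add: divide_le_eq)
  moreover have "grid_sq_sum s / Nsq - real (length s + 1) / 24 = 1 / 36 + 1 / (18 * Nsq)"
    using \<open>1 \<le> Nsq\<close> unfolding grid_sums_closed_form(2)[OF False] Nsq_def[symmetric]
    by (simp add: field_simps)
  ultimately show ?thesis unfolding Nsq_def[symmetric] abs_le_iff by linarith
qed (simp add: grid_sq_sum_Nil)

section \<open>Hammersley points\<close>

fun bits_value :: "bool list \<Rightarrow> nat" where
  "bits_value [] = 0"
| "bits_value (b # t) = (if b then 1 else 0) + 2 * bits_value t"

lemma sum_atLeast1_atMost_Suc: "(\<Sum>j=1..Suc m. g j) = g 1 + (\<Sum>j=1..m. g (Suc j))"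
proof -
  have "(\<Sum>j=1..Suc m. g j) = g 1 + (\<Sum>j=Suc 1..Suc m. g j)"
    by (rule sum.atLeast_Suc_atMost) simp
  also have "(\<Sum>j=Suc 1..Suc m. g j) = (\<Sum>j=1..m. g (Suc j))"
    by (rule sum.shift_bounds_cl_Suc_ivl)
  finally show ?thesis .
qed

lemma hammersley_fst_sum:
  "length t = m \<Longrightarrow>
    (\<Sum>j=1..m. (if t ! (j - 1) then 1 else 0) / 2 ^ (m + 1 - j)) = real (bits_value t) / 2 ^ m"
proof (induction t arbitrary: m)
  case (Cons b t)
  then obtain m' where m: "m = Suc m'" and lt: "length t = m'" by auto
  have "(\<Sum>j=1..m. (if (b # t) ! (j - 1) then 1 else 0) / 2 ^ (m + 1 - j) :: real)
      = (if b then 1 else 0) / 2 ^ m + (\<Sum>j=1..m'. (if t ! (j - 1) then 1 else 0) / 2 ^ (m' + 1 - j))"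
    unfolding m sum_atLeast1_atMost_Suc by (simp add: nth_Cons')
  also have "\<dots> = real (bits_value (b # t)) / 2 ^ m"
    unfolding Cons.IH[OF lt] m by (simp add: field_simps)
  finally show ?case .
qed simp

lemma hammersley_snd_sum:
  "length t = m \<Longrightarrow> length s = m \<Longrightarrow>
    (\<Sum>j=1..m. (if t ! (j - 1) \<noteq> s ! (j - 1) then 1 else 0) / 2 ^ j) = real (bitrev_xor s (bits_value t)) / 2 ^ m"
proof (induction t arbitrary: m s)
  case (Cons b t)
  then obtain m' c s' where m: "m = Suc m'" and lt: "length t = m'" and s: "s = c # s'"
    and ls: "length s' = m'"
    by (cases s) auto
  have "(\<Sum>j=1..m. (if (b # t) ! (j - 1) \<noteq> s ! (j - 1) then 1 else 0) / 2 ^ j :: real)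
      = (if b \<noteq> c then 1 else 0) / 2 + (\<Sum>j=1..m'. (if t ! (j - 1) \<noteq> s' ! (j - 1) then 1 else 0) / 2 ^ j) / 2"
    unfolding m s sum_atLeast1_atMost_Suc by (simp add: nth_Cons' sum_divide_distrib mult.commute)
  also have "\<dots> = real (bitrev_xor s (bits_value (b # t))) / 2 ^ m"
    unfolding Cons.IH[OF lt ls] m s using ls by (auto simp: field_simps)
  finally show ?case .
qed simp

lemma hammersley_point_eq:
  assumes "length t = m" "length s = m"
  shows "hammersley_point m s t = (real (bits_value t) / 2 ^ m, real (bitrev_xor s (bits_value t)) / 2 ^ m)"
  unfolding hammersley_point_def by (simp only: hammersley_fst_sum[OF assms(1)] hammersley_snd_sum[OF assms])

lemma sum_list_map_concat: "sum_list (map f (concat xss)) = sum_list (map (\<lambda>xs. sum_list (map f xs)) xss)"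
  by (induction xss) auto

lemma sum_list_n_lists_bits_value:
  "sum_list (map (\<lambda>t. F (bits_value t)) (List.n_lists m [False, True])) = (\<Sum>k<2 ^ m. F k :: real)"
proof (induction m arbitrary: F)
  case 0 then show ?case by simp
next
  case (Suc m)
  have "sum_list (map (\<lambda>t. F (bits_value t)) (List.n_lists (Suc m) [False, True]))
      = sum_list (map (\<lambda>t. F (2 * bits_value t) + F (1 + 2 * bits_value t)) (List.n_lists m [False, True]))"
    by (simp add: sum_list_map_concat comp_def)
  also have "\<dots> = (\<Sum>k<2 ^ m. F (2 * k) + F (1 + 2 * k))" by (rule Suc.IH)
  also have "\<dots> = (\<Sum>k<2 ^ Suc m. F k)"
    using sum_lessThan_double[of F "2 ^ m"] by (simp add: add.commute)
  finally show ?case .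
qed

definition sym_count_disc :: "bool list \<Rightarrow> real \<Rightarrow> real \<Rightarrow> real" where
  "sym_count_disc s a b =
    (\<Sum>k<2 ^ length s.
        (if real k < real (2 ^ length s) * a \<and> real (bitrev_xor s k) < real (2 ^ length s) * b
         then 1 else 0)
      + (if real k < real (2 ^ length s) * a \<and>
            real (2 ^ length s) - real (bitrev_xor s k) < real (2 ^ length s) * b
         then 1 else 0))
     - 2 * real (2 ^ length s) * a * b"

lemma length_sym_hammersley: "length (sym_hammersley m s) = 2 ^ (m + 1)"
  unfolding sym_hammersley_def shifted_hammersley_def by (simp add: length_n_lists numeral_2_eq_2 mult_2)

lemma real_length_filter: "real (length (filter P xs)) = sum_list (map (\<lambda>x. if P x then 1 else 0) xs)"
  by (induction xs) auto

lemma local_disc_sym_hammersley: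
  assumes "length s = m"
  shows "local_disc a b (sym_hammersley m s) = sym_count_disc s a b"
proof -
  let ?N = "(2::nat) ^ m"
  let ?ts = "List.n_lists m [False, True]"
  let ?P = "\<lambda>x::real\<times>real. 0 \<le> fst x \<and> fst x < a \<and> 0 \<le> snd x \<and> snd x < b"
  have Npos: "(0::real) < 2 ^ m" by simp
  have hp: "\<And>t. t \<in> set ?ts \<Longrightarrow> hammersley_point m s t = (real (bits_value t) / 2 ^ m, real (bitrev_xor s (bits_value t)) / 2 ^ m)"
    using hammersley_point_eq assms by (simp add: length_n_lists_elem)
  have c1: "\<And>k. (if ?P (real k / 2 ^ m, real (bitrev_xor s k) / 2 ^ m) then 1 else 0) =
     (if real k < real ?N * a \<and> real (bitrev_xor s k) < real ?N * b then 1 else (0::real))"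
    using Npos by (simp add: divide_less_eq mult.commute)
  have c2: "\<And>k. (if ?P (real k / 2 ^ m, 1 - real (bitrev_xor s k) / 2 ^ m) then 1 else 0) =
     (if real k < real ?N * a \<and> real ?N - real (bitrev_xor s k) < real ?N * b then 1 else (0::real))"
  proof -
    fix k
    have lt: "real (bitrev_xor s k) < 2 ^ m" using bitrev_xor_less[of s k] assms
      by (metis of_nat_less_iff of_nat_numeral of_nat_power)
    have "0 \<le> 1 - real (bitrev_xor s k) / 2 ^ m" using lt Npos by (simp add: field_simps)
    moreover have "(1 - real (bitrev_xor s k) / 2 ^ m < b) = (real ?N - real (bitrev_xor s k) < real ?N * b)"
      using Npos by (simp add: field_simps)
    ultimately show "(if ?P (real k / 2 ^ m, 1 - real (bitrev_xor s k) / 2 ^ m) then 1 else 0) =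
     (if real k < real ?N * a \<and> real ?N - real (bitrev_xor s k) < real ?N * b then 1 else (0::real))"
      using Npos by (simp add: divide_less_eq mult.commute)
  qed
  have "real (count_box a b (sym_hammersley m s)) =
     sum_list (map (\<lambda>t. (if ?P (hammersley_point m s t) then 1 else 0)) ?ts)
     + sum_list (map (\<lambda>t. (if ?P ((\<lambda>(x, y). (x, 1 - y)) (hammersley_point m s t)) then 1 else 0)) ?ts)"
    unfolding count_box_def sym_hammersley_def shifted_hammersley_def real_length_filter
    by (simp add: comp_def)
  also have "\<dots> = sum_list (map (\<lambda>t. (if ?P (real (bits_value t) / 2 ^ m, real (bitrev_xor s (bits_value t)) / 2 ^ m) then 1 else 0)) ?ts)
     + sum_list (map (\<lambda>t. (if ?P (real (bits_value t) / 2 ^ m, 1 - real (bitrev_xor s (bits_value t)) / 2 ^ m) then 1 else 0)) ?ts)"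
    by (simp add: hp cong: map_cong)
  also have "\<dots> = (\<Sum>k<?N. (if ?P (real k / 2 ^ m, real (bitrev_xor s k) / 2 ^ m) then 1 else 0))
      + (\<Sum>k<?N. (if ?P (real k / 2 ^ m, 1 - real (bitrev_xor s k) / 2 ^ m) then 1 else 0))"
    by (simp only: sum_list_n_lists_bits_value[of "\<lambda>k. if ?P (real k / 2 ^ m, real (bitrev_xor s k) / 2 ^ m) then 1 else 0" m]
           sum_list_n_lists_bits_value[of "\<lambda>k. if ?P (real k / 2 ^ m, 1 - real (bitrev_xor s k) / 2 ^ m) then 1 else 0" m])
  also have "\<dots> = (\<Sum>k<?N. (if real k < real ?N * a \<and> real (bitrev_xor s k) < real ?N * b then 1 else 0)
        + (if real k < real ?N * a \<and> real ?N - real (bitrev_xor s k) < real ?N * b then 1 else 0))"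
    by (simp only: c1 c2 sum.distrib)
  finally have cnt: "real (count_box a b (sym_hammersley m s)) = \<dots>" .
  show ?thesis unfolding local_disc_def sym_count_disc_def cnt length_sym_hammersley assms by simp
qed

section \<open>Comparison with a step function\<close>

definition grid_disc_step :: "bool list \<Rightarrow> real \<times> real \<Rightarrow> real" where
  "grid_disc_step s x = (if snd x \<le> 0 then 0
     else grid_disc s (nat \<lceil>real (2 ^ length s) * fst x\<rceil>) (nat \<lceil>real (2 ^ length s) * snd x\<rceil> - 1))"

lemma nat_ceiling_scaled:
  fixes N :: nat and a :: real
  assumes "0 \<le> a" "a \<le> 1"
  shows "nat \<lceil>real N * a\<rceil> \<le> N"
    and "real (nat \<lceil>real N * a\<rceil>) - 1 < real N * a"
    and "real N * a \<le> real (nat \<lceil>real N * a\<rceil>)"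
    and "\<And>k::nat. real k < real N * a \<longleftrightarrow> k < nat \<lceil>real N * a\<rceil>"
proof -
  have "0 \<le> real N * a" using assms by simp
  then have c0: "0 \<le> \<lceil>real N * a\<rceil>" by simp
  have "real N * a \<le> real N" using assms by (simp add: mult_left_le)
  then show "nat \<lceil>real N * a\<rceil> \<le> N" by (simp add: ceiling_le_iff nat_le_iff)
  have r: "real (nat \<lceil>real N * a\<rceil>) = real_of_int \<lceil>real N * a\<rceil>" using c0 by simp
  show "real (nat \<lceil>real N * a\<rceil>) - 1 < real N * a" "real N * a \<le> real (nat \<lceil>real N * a\<rceil>)"
    unfolding r by linarith+
  show "real k < real N * a \<longleftrightarrow> k < nat \<lceil>real N * a\<rceil>" for k :: nat
    using c0 by (metis less_ceiling_iff of_int_of_nat_eq zless_nat_eq_int_zless)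
qed

lemma sum_indicator_eq_card:
  "finite A \<Longrightarrow> (\<Sum>k\<in>A. if Q k then 1 else 0 :: real) = real (card {k\<in>A. Q k})"
  by (simp add: sum.inter_filter[symmetric])

lemma sum_indicator_lower_box:
  assumes "U \<le> 2 ^ length s"
    and "\<And>k::nat. real k < real (2 ^ length s) * a \<longleftrightarrow> k < U"
    and "\<And>k::nat. real k < real (2 ^ length s) * b \<longleftrightarrow> k < V"
  shows "(\<Sum>k<2 ^ length s. if real k < real (2 ^ length s) * a \<and>
      real (bitrev_xor s k) < real (2 ^ length s) * b then 1 else 0 :: real) = real (count_below s U V)"
proof -
  have "{k \<in> {..<2 ^ length s}. k < U \<and> bitrev_xor s k < V} = {k. k < U \<and> bitrev_xor s k < V}"
    using assms(1) by auto
  then show ?thesis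
    unfolding assms(2,3) count_below_def by (simp add: sum_indicator_eq_card)
qed

lemma sum_indicator_upper_box:
  assumes "U \<le> 2 ^ length s" and "v < 2 ^ length s"
    and "\<And>k::nat. real k < real (2 ^ length s) * a \<longleftrightarrow> k < U"
    and "\<And>k::nat. real k < real (2 ^ length s) * b \<longleftrightarrow> k < Suc v"
  shows "(\<Sum>k<2 ^ length s. if real k < real (2 ^ length s) * a \<and>
      real (2 ^ length s) - real (bitrev_xor s k) < real (2 ^ length s) * b then 1 else 0 :: real) =
    real U - real (count_below s U (2 ^ length s - v))"
proof -
  let ?N = "(2::nat) ^ length s"
  have upper: "real ?N - real (bitrev_xor s k) < real ?N * b \<longleftrightarrow> \<not> bitrev_xor s k < ?N - v" for k
  proof -
    have "real ?N - real (bitrev_xor s k) = real (?N - bitrev_xor s k)"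
      using bitrev_xor_less[of s k] by (simp add: of_nat_diff)
    then show ?thesis using assms(2) assms(4)[of "?N - bitrev_xor s k"] bitrev_xor_less[of s k] by auto
  qed
  have "{k \<in> {..<?N}. k < U \<and> \<not> bitrev_xor s k < ?N - v} =
      {k. k < U} - {k. k < U \<and> bitrev_xor s k < ?N - v}"
    using assms(1) by auto
  then have "(\<Sum>k<?N. if k < U \<and> \<not> bitrev_xor s k < ?N - v then 1 else 0 :: real) =
      real (card ({k. k < U} - {k. k < U \<and> bitrev_xor s k < ?N - v}))"
    by (simp add: sum_indicator_eq_card)
  also have "card ({k. k < U} - {k. k < U \<and> bitrev_xor s k < ?N - v}) = U - count_below s U (?N - v)"
    unfolding count_below_def by (subst card_Diff_subset) auto
  finally show ?thesis
    unfolding assms(3) upper using count_below_le[of s U] by (simp add: of_nat_diff)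
qed

text \<open>Bounds the error made by rounding \<open>a, b\<close> up to the grid in the term \<open>2 N a b\<close>.\<close>

lemma grid_rounding_bound:
  fixes U v N :: nat and p q :: real
  assumes "U \<le> N" "v + 1 \<le> N" "0 \<le> p" "p \<le> real U" "real U - 1 < p" "real v < q" "q \<le> real v + 1"
  shows "- real N \<le> real U * (2 * real v + 1) - 2 * p * q"
    and "real U * (2 * real v + 1) - 2 * p * q \<le> 3 * real N"
proof -
  have "0 \<le> q" using assms by linarith
  then have up: "p * q \<le> real U * (real v + 1)" using assms by (simp add: mult_mono)
  have lo: "real U * real v - real v \<le> p * q"
  proof (cases "U = 0")
    case False
    then have "(real U - 1) * real v \<le> p * q"
      using assms by (intro mult_mono) auto
    then show ?thesis by (simp add: algebra_simps)
  qed (use assms in simp)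
  have "real U \<le> real N" "real v + 1 \<le> real N" using assms by simp_all
  then show "- real N \<le> real U * (2 * real v + 1) - 2 * p * q"
    and "real U * (2 * real v + 1) - 2 * p * q \<le> 3 * real N"
    using up lo by (simp_all add: algebra_simps)
qed

lemma sym_count_disc_bottom: "sym_count_disc s a 0 = 0"
proof -
  have "\<not> 2 ^ length s < bitrev_xor s k" for k
    using bitrev_xor_less[of s k] by simp
  then show ?thesis unfolding sym_count_disc_def by simp
qed

lemma sym_count_disc_grid_disc_step:
  assumes "x \<in> cbox (0, 0) (1, 1)"
  shows "\<bar>sym_count_disc s (fst x) (snd x) - grid_disc_step s x\<bar> \<le> 5"
proof -
  obtain a b where x: "x = (a, b)" by (cases x)
  have a: "0 \<le> a" "a \<le> 1" and b: "0 \<le> b" "b \<le> 1"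
    using assms unfolding x by (auto simp: cbox_Pair_iff)
  let ?N = "(2::nat) ^ length s"
  show ?thesis
  proof (cases "b = 0")
    case True
    then show ?thesis unfolding x grid_disc_step_def by (simp add: sym_count_disc_bottom)
  next
    case False
    define U where "U = nat \<lceil>real ?N * a\<rceil>"
    define V where "V = nat \<lceil>real ?N * b\<rceil>"
    note fa = nat_ceiling_scaled[OF a, where N="2 ^ length s", folded U_def]
    note fb = nat_ceiling_scaled[OF b, where N="2 ^ length s", folded V_def]
    have "0 < real ?N * b" using False b by simp
    then obtain v where v: "V = Suc v" using fb(3) by (cases V) auto
    have vN: "v < ?N" using fb(1) v by simp
    have step: "grid_disc_step s (a, b) = grid_disc s U v"
      unfolding grid_disc_step_def U_def V_def using False b v V_def by simp
    have disc: "sym_count_disc s a b =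
        real (count_below s U V) + real U - real (count_below s U (?N - v)) - 2 * real ?N * a * b"
      unfolding sym_count_disc_def sum.distrib
      using sum_indicator_lower_box[OF fa(1) fa(4) fb(4)] sum_indicator_upper_box[OF fa(1) vN fa(4) fb(4)[unfolded v]]
      by simp
    have "real (count_below s U v) \<le> real (count_below s U V)"
        "real (count_below s U V) \<le> real (count_below s U v) + 1"
      unfolding v using count_below_mono[of s U v] count_below_Suc_le[OF fa(1), of v] by simp_all
    moreover have "?N - v = Suc (?N - 1 - v)" using vN by simp
    then have "real (count_below s U (?N - 1 - v)) \<le> real (count_below s U (?N - v))"
        "real (count_below s U (?N - v)) \<le> real (count_below s U (?N - 1 - v)) + 1"
      using count_below_mono[of s U "?N - 1 - v"] count_below_Suc_le[OF fa(1), of "?N - 1 - v"] by simp_all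
    moreover
    define R where "R = real U * (2 * real v + 1) - 2 * (real ?N * a) * (real ?N * b)"
    have "- real ?N \<le> R" "R \<le> 3 * real ?N"
      unfolding R_def using fa(1-3) fb(2,3) a vN v
      by (intro grid_rounding_bound; simp)+
    then have "-1 \<le> R / real ?N" "R / real ?N \<le> 3"
      by (simp_all add: divide_le_eq le_divide_eq)
    moreover have "sym_count_disc s a b - grid_disc s U v =
        (real (count_below s U V) - real (count_below s U v))
      - (real (count_below s U (?N - v)) - real (count_below s U (?N - 1 - v))) + R / real ?N"
      unfolding disc grid_disc_def R_def by (simp add: field_simps)
    ultimately show ?thesis unfolding x step by (simp add: abs_le_iff)
  qed
qed
section \<open>The integral of the squared step function\<close>

lemma has_integral_half_open_box:
  fixes a b c d :: real
  assumes "0 \<le> a" "a \<le> b" "b \<le> 1" "0 \<le> c" "c \<le> d" "d \<le> 1"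
  shows "((\<lambda>x::real\<times>real. if a < fst x \<and> fst x \<le> b \<and> c < snd x \<and> snd x \<le> d then 1 else 0)
          has_integral ((b - a) * (d - c))) (cbox (0, 0) (1, 1))"
proof -
  have sub: "cbox (a,c) (b,d) \<subseteq> cbox (0::real,0::real) (1,1)" using assms by (auto simp: cbox_Pair_iff)
  have "((\<lambda>x::real\<times>real. 1::real) has_integral (Henstock_Kurzweil_Integration.content (cbox (a,c) (b,d)) *\<^sub>R 1)) (cbox (a,c) (b,d))"
    by (rule has_integral_const)
  moreover have "Henstock_Kurzweil_Integration.content (cbox (a,c) (b,d)) = (b - a) * (d - c)"
    using assms by (simp add: content_Pair)
  ultimately have "((\<lambda>x::real\<times>real. 1::real) has_integral ((b - a) * (d - c))) (cbox (a,c) (b,d))" by simp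
  then have I: "((\<lambda>x::real\<times>real. if x \<in> cbox (a,c) (b,d) then 1 else 0::real) has_integral ((b - a) * (d - c))) (cbox (0, 0) (1, 1))"
    by (rule has_integral_restrict[OF sub, THEN iffD2])
  have neg: "negligible ({x::real\<times>real. (1,0) \<bullet> x = a} \<union> {x. (0,1) \<bullet> x = c})"
    by (intro negligible_Un negligible_hyperplane) (auto simp: zero_prod_def)
  show ?thesis
  proof (rule has_integral_spike[OF neg _ I])
    fix x :: "real \<times> real" assume "x \<in> cbox (0,0) (1,1) - ({x. (1,0) \<bullet> x = a} \<union> {x. (0,1) \<bullet> x = c})"
    then have "fst x \<noteq> a" "snd x \<noteq> c" by (cases x, auto simp: inner_Pair)+
    then show "(if a < fst x \<and> fst x \<le> b \<and> c < snd x \<and> snd x \<le> d then 1 else 0) = (if x \<in> cbox (a,c) (b,d) then 1 else 0::real)"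
      by (cases x) (auto simp: cbox_Pair_iff)
  qed
qed

lemma grid_disc_zero_left: "grid_disc s 0 v = 0"
  unfolding grid_disc_def count_below_def by simp

lemma grid_disc_full_left:
  assumes "v < 2 ^ length s"
  shows "grid_disc s (2 ^ length s) v = 0"
proof -
  let ?N = "(2::nat) ^ length s"
  have e1: "real (count_below s ?N v) = real v" using assms by (simp add: count_below_full)
  have "count_below s ?N (?N - 1 - v) = ?N - 1 - v" using assms by (simp add: count_below_full)
  then have e2: "real (count_below s ?N (?N - 1 - v)) = real ?N - 1 - real v" using assms by (simp add: of_nat_diff)
  have p: "(0::real) < real ?N" by simp
  show ?thesis unfolding grid_disc_def e1 e2 using p by (simp add: field_simps)
qed

lemma grid_sq_sum_shift: "(\<Sum>U\<in>{1..2 ^ length s}. \<Sum>v<2 ^ length s. (grid_disc s U v)\<^sup>2) = grid_sq_sum s"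
proof -
  let ?N = "(2::nat) ^ length s"
  let ?f = "\<lambda>U. \<Sum>v<?N. (grid_disc s U v)\<^sup>2"
  have "{1..?N} = Suc ` {..<?N}" by (auto simp: image_iff) (metis Suc_pred' less_Suc_eq_le not_le not_less_eq_eq lessThan_iff)
  then have "(\<Sum>U\<in>{1..?N}. ?f U) = (\<Sum>u<?N. ?f (Suc u))" by (simp add: sum.reindex)
  also have "\<dots> = (\<Sum>u<Suc ?N. ?f u) - ?f 0"
    using sum.lessThan_Suc_shift[of ?f ?N] by simp
  also have "\<dots> = (\<Sum>u<?N. ?f u) + ?f ?N - ?f 0" by simp
  also have "?f ?N = 0" by (simp add: grid_disc_full_left)
  also have "?f 0 = 0" by (simp add: grid_disc_zero_left)
  finally show ?thesis unfolding grid_sq_sum_def by simp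
qed

definition grid_cell :: "nat \<Rightarrow> nat \<Rightarrow> nat \<Rightarrow> real \<times> real \<Rightarrow> real" where
  "grid_cell N U V x = (if (real U - 1) / real N < fst x \<and> fst x \<le> real U / real N
       \<and> (real V - 1) / real N < snd x \<and> snd x \<le> real V / real N then 1 else 0)"

lemma ceiling_scaled_eq_iff:
  fixes N :: nat and t :: real
  assumes "N > 0"
  shows "((real k - 1) / real N < t \<and> t \<le> real k / real N) = (\<lceil>real N * t\<rceil> = int k)"
proof -
  have p: "(0::real) < real N" using assms by simp
  show ?thesis unfolding ceiling_eq_iff using p
    by (simp add: divide_less_eq le_divide_eq mult.commute)
qed

lemma has_integral_grid_cell:
  assumes "1 \<le> U" "U \<le> N" "1 \<le> V" "V \<le> N"
  shows "(grid_cell N U V has_integral (1 / (real N)\<^sup>2)) (cbox (0, 0) (1, 1))"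
proof -
  have p: "(0::real) < real N" using assms by simp
  have "(grid_cell N U V has_integral ((real U / real N - (real U - 1) / real N) * (real V / real N - (real V - 1) / real N))) (cbox (0, 0) (1, 1))"
    unfolding grid_cell_def
    by (rule has_integral_half_open_box) (use assms p in \<open>auto simp: divide_le_eq le_divide_eq\<close>)
  moreover have "(real U / real N - (real U - 1) / real N) * (real V / real N - (real V - 1) / real N) = 1 / (real N)\<^sup>2"
    using p by (simp add: field_simps power2_eq_square)
  ultimately show ?thesis by simp
qed

lemma sum_sum_delta:
  assumes "finite A" "finite B"
  shows "(\<Sum>U\<in>A. \<Sum>v\<in>B. (if U = U0 \<and> v = v0 then g U v else 0)) =
    (if U0 \<in> A \<and> v0 \<in> B then g U0 v0 else (0::real))"
proof -
  have "(\<Sum>U\<in>A. \<Sum>v\<in>B. (if U = U0 \<and> v = v0 then g U v else 0)) =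
      (\<Sum>U\<in>A. if U = U0 then (\<Sum>v\<in>B. if v = v0 then g U v else 0) else 0)"
    by (rule sum.cong) auto
  also have "\<dots> = (if U0 \<in> A then (\<Sum>v\<in>B. if v = v0 then g U0 v else 0) else 0)"
    using assms by (simp add: sum.delta)
  also have "\<dots> = (if U0 \<in> A \<and> v0 \<in> B then g U0 v0 else 0)"
    using assms by (simp add: sum.delta)
  finally show ?thesis .
qed

lemma sum_grid_cells_single:
  fixes g :: "nat \<Rightarrow> nat \<Rightarrow> real"
  assumes "1 \<le> U0" "U0 \<le> N" "1 \<le> V0" "V0 \<le> N"
    and "\<And>U v. c U v = (if U = U0 \<and> v = V0 - 1 then 1 else 0)"
  shows "(\<Sum>U\<in>{1..N}. \<Sum>v<N. g U v * c U v) = g U0 (V0 - 1)"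
proof -
  have "(\<Sum>U\<in>{1..N}. \<Sum>v<N. g U v * c U v) = (\<Sum>U\<in>{1..N}. \<Sum>v<N. if U = U0 \<and> v = V0 - 1 then g U v else 0)"
    unfolding assms(5) by (intro sum.cong refl) simp
  also have "\<dots> = g U0 (V0 - 1)"
    using assms(1-4) by (subst sum_sum_delta) auto
  finally show ?thesis .
qed

lemma grid_cell_nonpos:
  assumes "0 < N" "1 \<le> U" "a \<le> 0 \<or> b \<le> 0"
  shows "grid_cell N U (Suc v) (a, b) = 0"
proof -
  have "0 \<le> (real U - 1) / real N" "0 \<le> (real (Suc v) - 1) / real N" using assms by auto
  then have "\<not> ((real U - 1) / real N < a \<and> (real (Suc v) - 1) / real N < b)"
    using assms(3) by linarith
  then show ?thesis unfolding grid_cell_def by auto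
qed

lemma nat_ceiling_pos:
  assumes "0 < x"
  shows "int (nat \<lceil>x\<rceil>) = \<lceil>x\<rceil>" and "1 \<le> nat \<lceil>x\<rceil>"
proof -
  have "0 < \<lceil>x\<rceil>" using assms by simp
  then show "int (nat \<lceil>x\<rceil>) = \<lceil>x\<rceil>" and "1 \<le> nat \<lceil>x\<rceil>" by arith+
qed

lemma grid_cell_ceiling:
  assumes "0 < N" "0 < a" "0 < b"
  shows "grid_cell N U (Suc v) (a, b) =
    (if U = nat \<lceil>real N * a\<rceil> \<and> v = nat \<lceil>real N * b\<rceil> - 1 then 1 else 0)"
proof -
  define U0 V0 where "U0 = nat \<lceil>real N * a\<rceil>" and "V0 = nat \<lceil>real N * b\<rceil>"
  have "0 < real N * a" "0 < real N * b" using assms by simp_all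
  then have ca: "\<lceil>real N * a\<rceil> = int U0" and cb: "\<lceil>real N * b\<rceil> = int V0" "1 \<le> V0"
    unfolding U0_def V0_def using nat_ceiling_pos by simp_all
  have "((real U - 1) / real N < a \<and> a \<le> real U / real N) = (U = U0)"
    unfolding ceiling_scaled_eq_iff[OF assms(1)] ca by auto
  moreover have "((real (Suc v) - 1) / real N < b \<and> b \<le> real (Suc v) / real N) = (v = V0 - 1)"
    unfolding ceiling_scaled_eq_iff[OF assms(1)] cb(1) using cb(2) by auto
  ultimately have "((real U - 1) / real N < a \<and> a \<le> real U / real N
      \<and> (real (Suc v) - 1) / real N < b \<and> b \<le> real (Suc v) / real N) = (U = U0 \<and> v = V0 - 1)"
    by blast
  then show ?thesis unfolding grid_cell_def fst_conv snd_conv U0_def V0_def by (simp only:)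
qed

lemma grid_disc_step_sq_eq_sum_cells:
  assumes x: "x \<in> cbox (0, 0) (1, 1)"
  shows "(grid_disc_step s x)\<^sup>2 =
    (\<Sum>U\<in>{1..2 ^ length s}. \<Sum>v<2 ^ length s. (grid_disc s U v)\<^sup>2 * grid_cell (2 ^ length s) U (Suc v) x)"
proof -
  let ?N = "(2::nat) ^ length s"
  obtain a b where xab: "x = (a, b)" by (cases x)
  have a: "0 \<le> a" "a \<le> 1" and b: "0 \<le> b" "b \<le> 1"
    using x unfolding xab by (auto simp: cbox_Pair_iff)
  show ?thesis
  proof (cases "a \<le> 0 \<or> b \<le> 0")
    case True
    then have "grid_disc_step s x = 0"
      unfolding grid_disc_step_def xab using a grid_disc_zero_left by auto
    moreover have "grid_cell ?N U (Suc v) x = 0" if "U \<in> {1..?N}" for U v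
      using that True unfolding xab by (intro grid_cell_nonpos) auto
    ultimately show ?thesis by simp
  next
    case False
    define U0 where "U0 = nat \<lceil>real ?N * a\<rceil>"
    define V0 where "V0 = nat \<lceil>real ?N * b\<rceil>"
    have pos: "0 < real ?N * a" "0 < real ?N * b" using False by simp_all
    have "grid_disc_step s x = grid_disc s U0 (V0 - 1)"
      unfolding grid_disc_step_def xab U0_def V0_def using False by simp
    moreover have "(\<Sum>U\<in>{1..?N}. \<Sum>v<?N. (grid_disc s U v)\<^sup>2 * grid_cell ?N U (Suc v) x) =
        (grid_disc s U0 (V0 - 1))\<^sup>2"
    proof (rule sum_grid_cells_single)
      show "1 \<le> U0" "U0 \<le> ?N"
        unfolding U0_def by (rule nat_ceiling_pos(2)[OF pos(1)], rule nat_ceiling_scaled(1)[OF a])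
      show "1 \<le> V0" "V0 \<le> ?N"
        unfolding V0_def by (rule nat_ceiling_pos(2)[OF pos(2)], rule nat_ceiling_scaled(1)[OF b])
      show "grid_cell ?N U (Suc v) x = (if U = U0 \<and> v = V0 - 1 then 1 else 0)" for U v
        unfolding xab U0_def V0_def using False by (intro grid_cell_ceiling) auto
    qed
    ultimately show ?thesis by simp
  qed
qed

lemma has_integral_grid_disc_step_sq:
  "((\<lambda>x. (grid_disc_step s x)\<^sup>2) has_integral (grid_sq_sum s / (real (2 ^ length s))\<^sup>2)) (cbox (0, 0) (1, 1))"
proof -
  let ?N = "(2::nat) ^ length s"
  have "((\<lambda>x. \<Sum>U\<in>{1..?N}. \<Sum>v<?N. (grid_disc s U v)\<^sup>2 * grid_cell ?N U (Suc v) x) has_integral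
      (\<Sum>U\<in>{1..?N}. \<Sum>v<?N. (grid_disc s U v)\<^sup>2 * (1 / (real ?N)\<^sup>2))) (cbox (0, 0) (1, 1))"
    by (intro has_integral_sum has_integral_cmult_real has_integral_grid_cell) auto
  also have "(\<Sum>U\<in>{1..?N}. \<Sum>v<?N. (grid_disc s U v)\<^sup>2 * (1 / (real ?N)\<^sup>2)) =
      grid_sq_sum s / (real ?N)\<^sup>2"
    unfolding grid_sq_sum_shift[symmetric] by (simp add: sum_divide_distrib)
  finally show ?thesis
    by (rule has_integral_eq[rotated]) (simp add: grid_disc_step_sq_eq_sum_cells)
qed

section \<open>Passing to the \<open>L\<^sub>2\<close> norm\<close>

lemma abs_sym_count_disc_le:
  assumes "0 \<le> a" "a \<le> 1" "0 \<le> b" "b \<le> 1"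
  shows "\<bar>sym_count_disc s a b\<bar> \<le> 2 * real (2 ^ length s)"
proof -
  let ?S = "\<Sum>k<2 ^ length s. (if real k < real (2 ^ length s) * a \<and>
      real (bitrev_xor s k) < real (2 ^ length s) * b then 1 else 0)
    + (if real k < real (2 ^ length s) * a \<and>
      real (2 ^ length s) - real (bitrev_xor s k) < real (2 ^ length s) * b then 1 else 0 :: real)"
  have "0 \<le> ?S" by (rule sum_nonneg) simp
  moreover have "?S \<le> (\<Sum>k<(2::nat) ^ length s. 2::real)" by (rule sum_mono) simp
  moreover have "0 \<le> 2 * real (2 ^ length s) * a * b" "2 * real (2 ^ length s) * a * b \<le> 2 * real (2 ^ length s)"
    using assms by (simp_all add: mult_le_one)
  moreover have "(\<Sum>k<(2::nat) ^ length s. 2::real) = 2 * real (2 ^ length s)" by simp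
  ultimately show ?thesis unfolding sym_count_disc_def abs_le_iff by linarith
qed

lemma borel_measurable_fst_real [measurable]: "(\<lambda>x::real \<times> real. fst x) \<in> borel_measurable borel"
  by (intro borel_measurable_continuous_onI continuous_intros)

lemma borel_measurable_snd_real [measurable]: "(\<lambda>x::real \<times> real. snd x) \<in> borel_measurable borel"
  by (intro borel_measurable_continuous_onI continuous_intros)

lemma integrable_sym_count_disc_sq:
  "(\<lambda>x. (sym_count_disc s (fst x) (snd x))\<^sup>2) integrable_on cbox (0, 0) (1, 1)"
proof (rule measurable_bounded_by_integrable_imp_integrable_real)
  have "(\<lambda>x. (sym_count_disc s (fst x) (snd x))\<^sup>2) \<in> borel_measurable borel"
    unfolding sym_count_disc_def by measurable
  then show "(\<lambda>x. (sym_count_disc s (fst x) (snd x))\<^sup>2) \<in> borel_measurable (lebesgue_on (cbox (0, 0) (1, 1)))"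
    by (intro measurable_restrict_space1 measurable_completion) simp
  show "(\<lambda>x. (2 * real (2 ^ length s))\<^sup>2) integrable_on cbox (0, 0) (1, 1)"
    by (rule integrable_const)
  show "\<bar>(sym_count_disc s (fst x) (snd x))\<^sup>2\<bar> \<le> (2 * real (2 ^ length s))\<^sup>2"
    if "x \<in> cbox (0, 0) (1, 1)" for x :: "real \<times> real"
  proof -
    have "\<bar>sym_count_disc s (fst x) (snd x)\<bar> \<le> 2 * real (2 ^ length s)"
      using that abs_sym_count_disc_le[of "fst x" "snd x" s] by (cases x) (simp add: cbox_Pair_iff)
    then have "\<bar>sym_count_disc s (fst x) (snd x)\<bar>\<^sup>2 \<le> (2 * real (2 ^ length s))\<^sup>2"
      by (rule power_mono) simp
    then show ?thesis by simp
  qed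
qed simp

lemma power2_add_le_weighted:
  fixes g e l :: real
  assumes "0 < l"
  shows "(g + e)\<^sup>2 \<le> (1 + l) * g\<^sup>2 + (1 + 1 / l) * e\<^sup>2"
proof -
  have "0 \<le> (l * g - e)\<^sup>2" by simp
  then have "2 * g * e \<le> l * g\<^sup>2 + e\<^sup>2 / l"
    using assms by (simp add: field_simps power2_eq_square)
  then show ?thesis by (simp add: power2_eq_square algebra_simps)
qed

text \<open>Optimising the weight \<open>l\<close> turns the family of bounds into Minkowski's inequality;
  the degenerate cases \<open>B = 0\<close> or \<open>F = 0\<close> need \<open>l\<close> to tend to \<open>0\<close> or \<open>\<infinity>\<close>.\<close>

lemma sqrt_le_sqrt_add_sqrt_if_weighted_le:
  fixes A B F :: real
  assumes B: "0 \<le> B" and F: "0 \<le> F"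
    and le: "\<And>l. 0 < l \<Longrightarrow> A \<le> (1 + l) * B + (1 + 1 / l) * F"
  shows "sqrt A \<le> sqrt B + sqrt F"
proof (cases "B = 0 \<or> F = 0")
  case True
  have "A \<le> B + F"
  proof (rule field_le_epsilon)
    fix e :: real assume e: "0 < e"
    consider "B = 0" "F = 0" | "B = 0" "0 < F" | "0 < B" "F = 0" using True B F by linarith
    then show "A \<le> B + F + e"
    proof cases
      case 1
      then show ?thesis using le[of 1] e by simp
    next
      case 2
      then have "(1 + 1 / (F / e)) * F = F + e" using e by (simp add: field_simps)
      then show ?thesis using le[of "F / e"] 2 e by simp
    next
      case 3
      then have "(1 + e / B) * B = B + e" using e by (simp add: field_simps)
      then show ?thesis using le[of "e / B"] 3 e by simp
    qed
  qed
  then have "sqrt A \<le> sqrt (B + F)" by (rule real_sqrt_le_mono)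
  with True show ?thesis by auto
next
  case False
  define b f where "b = sqrt B" and "f = sqrt F"
  have b: "0 < b" "b\<^sup>2 = B" and f: "0 < f" "f\<^sup>2 = F"
    using False B F unfolding b_def f_def by auto
  have "A \<le> (1 + f / b) * B + (1 + 1 / (f / b)) * F" using le[of "f / b"] b f by simp
  also have "\<dots> = (b + f)\<^sup>2" using b f by (simp add: field_simps power2_eq_square)
  finally have "sqrt A \<le> sqrt ((b + f)\<^sup>2)" by (rule real_sqrt_le_mono)
  then show ?thesis using b f unfolding b_def f_def by simp
qed

lemma sqrt_integral_sq_le:
  fixes f g :: "'a::euclidean_space \<Rightarrow> real"
  assumes f: "((\<lambda>x. (f x)\<^sup>2) has_integral I) S" and g: "((\<lambda>x. (g x)\<^sup>2) has_integral J) S"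
    and S: "((\<lambda>x. 1) has_integral M) S" and E: "0 \<le> E" "\<And>x. x \<in> S \<Longrightarrow> \<bar>f x - g x\<bar> \<le> E"
  shows "sqrt I \<le> sqrt J + E * sqrt M"
proof -
  have "0 \<le> J" "0 \<le> M" using has_integral_nonneg[OF g] has_integral_nonneg[OF S] by auto
  have "sqrt I \<le> sqrt J + sqrt (E\<^sup>2 * M)"
  proof (rule sqrt_le_sqrt_add_sqrt_if_weighted_le)
    fix l :: real assume l: "0 < l"
    have int: "((\<lambda>x. (1 + l) * (g x)\<^sup>2 + (1 + 1 / l) * E\<^sup>2 * 1) has_integral
        (1 + l) * J + (1 + 1 / l) * E\<^sup>2 * M) S"
      by (intro has_integral_add has_integral_cmult_real g S)
    have "I \<le> (1 + l) * J + (1 + 1 / l) * E\<^sup>2 * M"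
    proof (rule has_integral_le[OF f int])
      fix x assume "x \<in> S"
      then have "\<bar>f x - g x\<bar>\<^sup>2 \<le> E\<^sup>2" using E by (intro power_mono) auto
      then have "(f x - g x)\<^sup>2 \<le> E\<^sup>2" by simp
      then show "(f x)\<^sup>2 \<le> (1 + l) * (g x)\<^sup>2 + (1 + 1 / l) * E\<^sup>2 * 1"
        using power2_add_le_weighted[OF l, of "g x" "f x - g x"] l
        by (smt (verit) mult_left_mono divide_nonneg_pos)
    qed
    then show "I \<le> (1 + l) * J + (1 + 1 / l) * (E\<^sup>2 * M)" by (simp add: mult.assoc)
  qed (use \<open>0 \<le> J\<close> \<open>0 \<le> M\<close> in auto)
  then show ?thesis using E by (simp add: real_sqrt_mult)
qed

lemma abs_sqrt_integral_sq_diff_le: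
  fixes f g :: "'a::euclidean_space \<Rightarrow> real"
  assumes "((\<lambda>x. (f x)\<^sup>2) has_integral I) S" "((\<lambda>x. (g x)\<^sup>2) has_integral J) S"
    and "((\<lambda>x. 1) has_integral M) S" "0 \<le> E" "\<And>x. x \<in> S \<Longrightarrow> \<bar>f x - g x\<bar> \<le> E"
  shows "\<bar>sqrt I - sqrt J\<bar> \<le> E * sqrt M"
  using sqrt_integral_sq_le[of f I S g J M E] sqrt_integral_sq_le[of g J S f I M E] assms
  by (fastforce simp: abs_minus_commute)

lemma abs_sqrt_diff_le_sqrt_abs_diff:
  fixes x y :: real
  assumes "0 \<le> x" "0 \<le> y"
  shows "\<bar>sqrt x - sqrt y\<bar> \<le> sqrt \<bar>x - y\<bar>"
proof -
  have *: "sqrt p \<le> sqrt q + sqrt \<bar>p - q\<bar>" if "0 \<le> q" for p q :: real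
  proof -
    have "sqrt p \<le> sqrt (q + \<bar>p - q\<bar>)" by (rule real_sqrt_le_mono) simp
    also have "\<dots> \<le> sqrt q + sqrt \<bar>p - q\<bar>" using that by (simp add: sqrt_add_le_add_sqrt)
    finally show ?thesis .
  qed
  show ?thesis using *[of y x] *[of x y] assms by (simp add: abs_minus_commute abs_le_iff)
qed

lemma sqrt_integral_local_disc_sym_hammersley:
  "\<bar>sqrt (integral (cbox (0, 0) (1, 1)) (\<lambda>ab. (local_disc (fst ab) (snd ab) (sym_hammersley (length s) s))\<^sup>2))
     - sqrt (real (length s + 1) / 24)\<bar> \<le> 6"
proof -
  define I where "I = integral (cbox (0, 0) (1, 1)) (\<lambda>x. (sym_count_disc s (fst x) (snd x))\<^sup>2)"
  define Q where "Q = grid_sq_sum s / (real (2 ^ length s))\<^sup>2"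
  have unit: "((\<lambda>x. 1::real) has_integral 1) (cbox (0, 0) (1::real, 1::real))"
    using has_integral_const[of "1::real" "(0::real, 0::real)" "(1, 1)"] by (simp add: content_Pair)
  have "\<bar>sqrt I - sqrt Q\<bar> \<le> 5 * sqrt 1"
    using integrable_sym_count_disc_sq[of s] has_integral_grid_disc_step_sq[of s] unit
      sym_count_disc_grid_disc_step[of _ s]
    unfolding I_def Q_def by (intro abs_sqrt_integral_sq_diff_le) auto
  moreover have "\<bar>sqrt Q - sqrt (real (length s + 1) / 24)\<bar> \<le> sqrt 1"
  proof -
    have "0 \<le> Q" unfolding Q_def grid_sq_sum_def by (simp add: sum_nonneg)
    then have "\<bar>sqrt Q - sqrt (real (length s + 1) / 24)\<bar> \<le> sqrt \<bar>Q - real (length s + 1) / 24\<bar>"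
      by (intro abs_sqrt_diff_le_sqrt_abs_diff) auto
    also have "\<dots> \<le> sqrt 1" unfolding Q_def using grid_sq_sum_approx[of s] by simp
    finally show ?thesis .
  qed
  moreover have "(\<lambda>ab. (local_disc (fst ab) (snd ab) (sym_hammersley (length s) s))\<^sup>2) =
      (\<lambda>x. (sym_count_disc s (fst x) (snd x))\<^sup>2)"
    by (simp add: local_disc_sym_hammersley)
  ultimately show ?thesis unfolding I_def by simp
qed

lemma ln_two_power_div: "ln (real (2 ^ n)) / (24 * ln 2) = real n / 24"
proof -
  have "ln (real ((2::nat) ^ n)) = real n * ln 2" by (simp add: ln_realpow)
  then show ?thesis by simp
qed

theorem corollary1:
  shows "\<exists>C>0. \<forall>m::nat. \<forall>\<sigma>::bool list. length \<sigma> = m \<longrightarrow>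
    \<bar>L2_disc (sym_hammersley m \<sigma>) -
      (1 / real (2 ^ (m + 1))) * sqrt (ln (real (2 ^ (m + 1))) / (24 * ln 2))\<bar>
    \<le> C / real (2 ^ (m + 1))"
proof (intro exI[of _ 6] conjI allI impI)
  fix m :: nat and \<sigma> :: "bool list"
  assume m: "length \<sigma> = m"
  define c where "c = 1 / real ((2::nat) ^ (m + 1))"
  define X where "X = sqrt (integral (cbox (0, 0) (1, 1))
    (\<lambda>ab. (local_disc (fst ab) (snd ab) (sym_hammersley m \<sigma>))\<^sup>2))"
  have "0 < c" unfolding c_def by simp
  have "L2_disc (sym_hammersley m \<sigma>) = c * X"
    unfolding L2_disc_def length_sym_hammersley c_def X_def ..
  then have "\<bar>L2_disc (sym_hammersley m \<sigma>) - c * sqrt (ln (real (2 ^ (m + 1))) / (24 * ln 2))\<bar> =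
      c * \<bar>X - sqrt (real (m + 1) / 24)\<bar>"
    using \<open>0 < c\<close> unfolding ln_two_power_div by (simp add: abs_mult right_diff_distrib[symmetric])
  also have "\<dots> \<le> c * 6"
    using sqrt_integral_local_disc_sym_hammersley[of \<sigma>] \<open>0 < c\<close> unfolding m X_def by simp
  finally show "\<bar>L2_disc (sym_hammersley m \<sigma>) - (1 / real (2 ^ (m + 1))) * sqrt (ln (real (2 ^ (m + 1))) / (24 * ln 2))\<bar>
      \<le> 6 / real (2 ^ (m + 1))"
    by (simp add: c_def)
qed simp

end
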